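(* For $k\in\{1,5\}$ and $d_2$ an even integer, let $S_{k,d_2}$ be the filtered $\lambda$-ring structure on $\mathbf{Z}[x]/(x^4)$ with Adams operations $\psi^p(x)=p^2x+\frac{kp^2(p^2-1)}{12}x^2+d_px^3$ for all primes $p$, where for odd primes $p$, $d_p=\frac{p^2(p^4-1)d_2}{60}+\frac{k^2p^2(p^2-1)(p^2-4)}{360}$. Then $S_{k,d_2}$ and $S_{k',d'_2}$ are isomorphic filtered $\lambda$-rings if and only if $k=k'$ and $d_2\equiv d'_2\pmod{60}$.
   Context: A (special) $\lambda$-ring is a commutative ring with operations $\lambda^i$ satisfying the Atiyah–Tall axioms; a filtered $\lambda$-ring is a $\lambda$-ring with decreasing filtration by ideals closed under $\lambda^i$, $i\ge1$; isomorphisms are filtration-preserving $\lambda$-ring isomorphisms. $\mathbf{Z}[x]/(x^4)$ is filtered with $x$ in a fixed positive filtration $d$. These polynomials do define filtered $\lambda$-ring structures. *)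

theory Defs
  imports "HOL-Computational_Algebra.Polynomial" "HOL-Computational_Algebra.Primes"
          "HOL-Library.Multiset"
begin

text \<open>The ring Z[x]/(x^4), realised inside Q[x] by canonical representatives
  (polynomials of degree < 4 with integer coefficients); products are
  truncated modulo x^4.  Rational coefficients are only used so that the
  Newton recursion (which divides by n) can be written down; the lambda
  operations of the structures considered land in the integral carrier.\<close>

definition trunc4 :: "rat poly \<Rightarrow> rat poly" where
  "trunc4 p = p mod monom 1 4"

definition Zx4 :: "rat poly set" where
  "Zx4 = {p. degree p < 4 \<and> (\<forall>i. coeff p i \<in> \<int>)}"

definition mul4 :: "rat poly \<Rightarrow> rat poly \<Rightarrow> rat poly" where
  "mul4 a b = trunc4 (a * b)"

text \<open>Filtration with x in filtration degree d:  F^j = ideal (x^m) with m*d \<ge> j.\<close>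
definition filt :: "nat \<Rightarrow> nat \<Rightarrow> rat poly set" where
  "filt d j = {a \<in> Zx4. \<forall>i. i * d < j \<longrightarrow> coeff a i = 0}"

definition dcoef :: "int \<Rightarrow> int \<Rightarrow> nat \<Rightarrow> rat" where
  "dcoef k d2 p = (if p = 2 then of_int d2
     else of_nat (p^2 * (p^4 - 1)) * of_int d2 / 60
          + of_int (k^2) * of_nat (p^2 * (p^2 - 1)) * (of_nat p ^ 2 - 4) / 360)"

definition psi_prime :: "int \<Rightarrow> int \<Rightarrow> nat \<Rightarrow> rat poly" where
  "psi_prime k d2 p =
     [: 0, of_nat (p^2), of_int k * of_nat (p^2 * (p^2 - 1)) / 12, dcoef k d2 p :]"

text \<open>psi^n(x) for arbitrary n \<ge> 1, via psi^{mn} = psi^m psi^n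
  (applying psi^p to u amounts to substituting psi^p(x) for x in u).\<close>
definition psi_x :: "int \<Rightarrow> int \<Rightarrow> nat \<Rightarrow> rat poly" where
  "psi_x k d2 n = fold (\<lambda>p u. trunc4 (pcompose u (psi_prime k d2 p)))
       (sorted_list_of_multiset (prime_factorization n)) [:0, 1:]"

definition adams :: "int \<Rightarrow> int \<Rightarrow> nat \<Rightarrow> rat poly \<Rightarrow> rat poly" where
  "adams k d2 n a = trunc4 (pcompose a (psi_x k d2 n))"

text \<open>The list [lambda^0(a), ..., lambda^n(a)] via Newton's identities
  m lambda^m = sum_{i=1..m} (-1)^(i-1) psi^i lambda^(m-i).\<close>
fun lams :: "int \<Rightarrow> int \<Rightarrow> nat \<Rightarrow> rat poly \<Rightarrow> rat poly list" where
  "lams k d2 0 a = [1]"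
| "lams k d2 (Suc m) a = (let L = lams k d2 m a in
     L @ [smult (1 / of_nat (Suc m))
            (\<Sum>i\<in>{1..Suc m}. smult ((-1) ^ (i - 1))
                (mul4 (adams k d2 i a) (L ! (Suc m - i))))])"

definition lam :: "int \<Rightarrow> int \<Rightarrow> nat \<Rightarrow> rat poly \<Rightarrow> rat poly" where
  "lam k d2 n a = lams k d2 n a ! n"

definition filt_lambda_iso ::
    "nat \<Rightarrow> int \<Rightarrow> int \<Rightarrow> int \<Rightarrow> int \<Rightarrow> (rat poly \<Rightarrow> rat poly) \<Rightarrow> bool" where
  "filt_lambda_iso d k d2 k' d2' f \<longleftrightarrow>
     bij_betw f Zx4 Zx4
   \<and> f 1 = 1
   \<and> (\<forall>a\<in>Zx4. \<forall>b\<in>Zx4. f (a + b) = f a + f b)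
   \<and> (\<forall>a\<in>Zx4. \<forall>b\<in>Zx4. f (mul4 a b) = mul4 (f a) (f b))
   \<and> (\<forall>j. f ` filt d j = filt d j)
   \<and> (\<forall>n. \<forall>a\<in>Zx4. f (lam k d2 n a) = lam k' d2' n (f a))"

definition iso_filt_lambda :: "nat \<Rightarrow> int \<Rightarrow> int \<Rightarrow> int \<Rightarrow> int \<Rightarrow> bool" where
  "iso_filt_lambda d k d2 k' d2' \<longleftrightarrow> (\<exists>f. filt_lambda_iso d k d2 k' d2' f)"

end

theory Submission
  imports Defs
begin

(* An isomorphism f of filtered lambda-rings S_{k,d2} -> S_{k',d2'} is in particular a ring
   automorphism of Z[x]/(x^4), hence the substitution x |-> g = e x + a x^2 + b x^3 with e = +-1
   (g has no constant term because x is nilpotent).  As 2 lambda^2(x) = x^2 - psi^2(x), f also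
   intertwines psi^2, i.e. psi^2(g) = g(psi'^2(x)); the coefficients of x^2 and x^3 give
   12 a = k e^2 - e k' and d2 e^3 - e d2' = 60 b + (terms in a).  For k, k' in {1, 5} this forces
   e = 1, a = 0, k = k' and d2 - d2' = 60 b.
   Conversely, if d2 - d2' = 60 B then d_p - d'_p = B (p^6 - p^2) for every prime p, which says
   exactly that the invertible, filtration-preserving substitution x |-> x + B x^3 intertwines
   psi^p; hence it intertwines every psi^n and, by Newton's identities, every lambda^n. *)

section \<open>Truncation modulo a power of x\<close>

lemma coeff_mod_monom_1:
  fixes p :: "'a::field poly"
  shows "coeff (p mod monom 1 n) i = (if i < n then coeff p i else 0)"
proof -
  have "coeff p i = coeff (monom 1 n * (p div monom 1 n)) i + coeff (p mod monom 1 n) i"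
    by (metis coeff_add div_mult_mod_eq mult.commute)
  moreover have "p mod monom 1 n = 0 \<or> degree (p mod monom 1 n) < n"
    by (metis degree_mod_less degree_monom_eq monom_eq_0_iff one_neq_zero)
  ultimately show ?thesis by (auto simp: coeff_monom_mult coeff_eq_0)
qed

lemma pcompose_mod_monom_1_left:
  fixes p r :: "'a::field poly"
  assumes "coeff r 0 = 0"
  shows "pcompose (p mod monom 1 n) r mod monom 1 n = pcompose p r mod monom 1 n"
proof -
  obtain s where s: "p - p mod monom 1 n = monom 1 n * s"
    by (metis add_diff_cancel_right' div_mult_mod_eq mult.commute)
  have "monom 1 1 dvd r" using assms by (simp add: monom_1_dvd_iff')
  then have "monom 1 1 ^ n dvd r ^ n" by (rule dvd_power_same)
  moreover have "pcompose (monom 1 n) r = r ^ n"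
    by (induction n) (simp_all add: monom_Suc pcompose_pCons pcompose_mult pcompose_1)
  ultimately have "monom 1 n dvd pcompose p r - pcompose (p mod monom 1 n) r"
    by (simp add: monom_power pcompose_mult s flip: pcompose_diff)
  then show ?thesis
    by (simp add: mod_eq_dvd_iff dvd_diff_commute)
qed

lemma pcompose_mod_monom_1_right:
  fixes p q :: "'a::field poly"
  shows "pcompose p (q mod monom 1 n) mod monom 1 n = pcompose p q mod monom 1 n"
proof (induction p)
  case (pCons a p)
  then show ?case
    unfolding pcompose_pCons by (intro mod_add_cong mod_mult_cong) simp_all
qed simp

lemma coeff_trunc4: "coeff (trunc4 p) i = (if i < 4 then coeff p i else 0)"
  by (simp add: trunc4_def coeff_mod_monom_1)

lemma degree_trunc4: "degree (trunc4 p) < 4"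
  using degree_le[of 3 "trunc4 p"] by (simp add: coeff_trunc4)

lemma trunc4_id: "degree p < 4 \<Longrightarrow> trunc4 p = p"
  by (simp add: poly_eq_iff coeff_trunc4 coeff_eq_0)

lemma trunc4_trunc4 [simp]: "trunc4 (trunc4 p) = trunc4 p"
  by (simp add: trunc4_id degree_trunc4)

lemma trunc4_add: "trunc4 (p + q) = trunc4 p + trunc4 q"
  and trunc4_diff: "trunc4 (p - q) = trunc4 p - trunc4 q"
  and trunc4_smult: "trunc4 (smult c p) = smult c (trunc4 p)"
  by (simp_all add: poly_eq_iff coeff_trunc4)

lemma trunc4_mult: "trunc4 (p * q) = mul4 (trunc4 p) (trunc4 q)"
  by (simp add: mul4_def trunc4_def mod_mult_eq)

lemma coeff_mul4_0: "coeff (mul4 a b) 0 = coeff a 0 * coeff b 0"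
  by (simp add: mul4_def coeff_trunc4 coeff_mult_0)

lemma mul4_mul4: "mul4 a (mul4 b c) = trunc4 (a * (b * c))"
  by (simp add: mul4_def trunc4_def mod_mult_right_eq)

definition pcompose4 :: "rat poly \<Rightarrow> rat poly \<Rightarrow> rat poly" where
  "pcompose4 p q = trunc4 (pcompose p q)"

lemma adams_eq_pcompose4: "adams k d2 n a = pcompose4 a (psi_x k d2 n)"
  by (simp add: adams_def pcompose4_def)

lemma psi_x_eq_fold_pcompose4:
  "psi_x k d2 n = fold (\<lambda>p u. pcompose4 u (psi_prime k d2 p))
       (sorted_list_of_multiset (prime_factorization n)) [:0, 1:]"
  by (simp add: psi_x_def pcompose4_def)

lemma pcompose4_trunc4_left: "coeff r 0 = 0 \<Longrightarrow> pcompose4 (trunc4 p) r = pcompose4 p r"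
  unfolding pcompose4_def trunc4_def by (rule pcompose_mod_monom_1_left)

lemma pcompose4_trunc4_right: "pcompose4 p (trunc4 q) = pcompose4 p q"
  unfolding pcompose4_def trunc4_def by (rule pcompose_mod_monom_1_right)

lemma pcompose4_add: "pcompose4 (p + q) r = pcompose4 p r + pcompose4 q r"
  and pcompose4_diff: "pcompose4 (p - q) r = pcompose4 p r - pcompose4 q r"
  and pcompose4_smult: "pcompose4 (smult c p) r = smult c (pcompose4 p r)"
  and pcompose4_1: "pcompose4 1 r = 1"
  by (simp_all add: pcompose4_def pcompose_add pcompose_diff pcompose_smult pcompose_1
      trunc4_add trunc4_diff trunc4_smult trunc4_id)

lemma pcompose4_X_left: "pcompose4 [:0, 1:] q = trunc4 q"
  and pcompose4_X_right: "pcompose4 p [:0, 1:] = trunc4 p"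
  by (simp_all add: pcompose4_def pcompose_pCons)

lemma pcompose4_mul4:
  "coeff r 0 = 0 \<Longrightarrow> pcompose4 (mul4 p q) r = mul4 (pcompose4 p r) (pcompose4 q r)"
  unfolding mul4_def by (simp add: pcompose4_trunc4_left) (simp add: pcompose4_def pcompose_mult trunc4_mult)

lemma pcompose4_assoc:
  "coeff r 0 = 0 \<Longrightarrow> pcompose4 (pcompose4 p q) r = pcompose4 p (pcompose4 q r)"
  by (metis pcompose4_def pcompose4_trunc4_left pcompose4_trunc4_right pcompose_assoc)

lemma coeff_pcompose4_0: "coeff r 0 = 0 \<Longrightarrow> coeff (pcompose4 p r) 0 = coeff p 0"
  by (simp add: pcompose4_def coeff_trunc4 poly_0_coeff_0)

lemma coeff_pcompose4_1: "coeff r 0 = 0 \<Longrightarrow> coeff (pcompose4 p r) 1 = coeff p 1 * coeff r 1"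
  by (cases p) (simp add: pcompose4_def coeff_trunc4 pcompose_pCons coeff_mult poly_0_coeff_0)

lemma pcompose4_pCons4:
  "pcompose4 [:a0, a1, a2, a3:] [:0, b1, b2, b3:] =
     [:a0, a1 * b1, a1 * b2 + a2 * b1^2, a1 * b3 + 2 * a2 * b1 * b2 + a3 * b1^3:]"
  by (simp add: pcompose4_def poly_eq_iff coeff_trunc4 pcompose_pCons coeff_pCons algebra_simps
      power2_eq_square power3_eq_cube split: nat.split)

section \<open>Substitutions intertwining the Adams operations\<close>

lemma coeff_fold_pcompose4_0:
  assumes "\<And>p. p \<in> set ps \<Longrightarrow> coeff (v p) 0 = 0"
  shows "coeff (fold (\<lambda>p w. pcompose4 w (v p)) ps b) 0 = coeff b 0"
  using assms by (induction ps arbitrary: b) (simp_all add: coeff_pcompose4_0)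

lemma fold_pcompose4_intertwining:
  assumes "coeff g 0 = 0"
    and "\<And>p. p \<in> set ps \<Longrightarrow> coeff (v p) 0 = 0"
    and "\<And>p. p \<in> set ps \<Longrightarrow> pcompose4 (u p) g = pcompose4 g (v p)"
    and "pcompose4 a g = pcompose4 g b"
  shows "pcompose4 (fold (\<lambda>p w. pcompose4 w (u p)) ps a) g =
         pcompose4 g (fold (\<lambda>p w. pcompose4 w (v p)) ps b)"
  using assms(2-4)
proof (induction ps arbitrary: a b)
  case (Cons p ps)
  have v0: "coeff (v p) 0 = 0" using Cons.prems(1) by simp
  have "pcompose4 (pcompose4 a (u p)) g = pcompose4 a (pcompose4 g (v p))"
    using assms(1) Cons.prems(2) by (simp add: pcompose4_assoc)
  also have "\<dots> = pcompose4 g (pcompose4 b (v p))"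
    using v0 Cons.prems(3) by (metis pcompose4_assoc)
  finally show ?case
    using Cons.prems Cons.IH by simp
qed simp

lemma coeff_psi_x_0: "coeff (psi_x k d2 n) 0 = 0"
  unfolding psi_x_eq_fold_pcompose4
  by (subst coeff_fold_pcompose4_0) (simp_all add: psi_prime_def)

lemma psi_x_intertwining:
  assumes "coeff g 0 = 0"
    and "\<And>p. pcompose4 (psi_prime k d2 p) g = pcompose4 g (psi_prime k' d2' p)"
  shows "pcompose4 (psi_x k d2 n) g = pcompose4 g (psi_x k' d2' n)"
  unfolding psi_x_eq_fold_pcompose4
  using assms by (intro fold_pcompose4_intertwining)
    (simp_all add: psi_prime_def pcompose4_X_left pcompose4_X_right)

lemma adams_intertwining:
  assumes "coeff g 0 = 0"
    and "\<And>p. pcompose4 (psi_prime k d2 p) g = pcompose4 g (psi_prime k' d2' p)"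
  shows "pcompose4 (adams k d2 n a) g = adams k' d2' n (pcompose4 a g)"
  using assms psi_x_intertwining[OF assms, of n] coeff_psi_x_0[of k' d2' n]
  by (simp add: adams_eq_pcompose4 pcompose4_assoc)

lemma length_lams: "length (lams k d2 n a) = Suc n"
  by (induction n) (simp_all add: Let_def)

lemma lam_commute:
  assumes f_add: "\<And>p q. f (p + q) = f p + f q"
    and f_smult: "\<And>c p. f (smult c p) = smult c (f p)"
    and f_one: "f 1 = 1"
    and f_mul: "\<And>p q. f (mul4 p q) = mul4 (f p) (f q)"
    and f_adams: "\<And>n p. f (adams k d2 n p) = adams k' d2' n (f p)"
  shows "f (lam k d2 n a) = lam k' d2' n (f a)"
proof -
  have "f 0 = 0" using f_smult[of 0 0] by simp
  then have sum: "f (sum h A) = (\<Sum>i\<in>A. f (h i))" for h :: "nat \<Rightarrow> rat poly" and A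
    using sum_comp_morphism[of f h A] f_add by (simp add: comp_def)
  have "\<forall>i\<le>n. f (lams k d2 n a ! i) = lams k' d2' n (f a) ! i"
  proof (induction n)
    case 0
    then show ?case by (simp add: f_one)
  next
    case (Suc m)
    have "f (\<Sum>j\<in>{1..Suc m}. smult ((-1) ^ (j - 1))
              (mul4 (adams k d2 j a) (lams k d2 m a ! (Suc m - j)))) =
          (\<Sum>j\<in>{1..Suc m}. smult ((-1) ^ (j - 1))
              (mul4 (adams k' d2' j (f a)) (lams k' d2' m (f a) ! (Suc m - j))))"
      unfolding sum using Suc.IH by (intro sum.cong) (auto simp: f_smult f_mul f_adams)
    then have "f (lams k d2 (Suc m) a ! Suc m) = lams k' d2' (Suc m) (f a) ! Suc m"
      by (simp add: Let_def nth_append length_lams f_smult del: sum.cl_ivl_Suc)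
    then show ?case
      using Suc.IH by (auto simp: Let_def nth_append length_lams le_Suc_eq)
  qed
  then show ?thesis by (simp add: lam_def)
qed

lemma pCons4_coeffs: "degree a < 4 \<Longrightarrow> [:coeff a 0, coeff a 1, coeff a 2, coeff a 3:] = a"
  by (auto simp: poly_eq_iff coeff_pCons coeff_eq_0 numeral_eq_Suc split: nat.split)

lemma degree_pCons4: "degree [:a0, a1, a2, a3:] < 4"
  using degree_le[of 3 "[:a0, a1, a2, a3:]"] by (simp add: coeff_pCons split: nat.split)

lemma pCons4_in_Zx4_iff:
  "[:a0, a1, a2, a3:] \<in> Zx4 \<longleftrightarrow> a0 \<in> \<int> \<and> a1 \<in> \<int> \<and> a2 \<in> \<int> \<and> a3 \<in> \<int>"
proof -
  have "(\<forall>i. coeff [:a0, a1, a2, a3:] i \<in> \<int>) \<longleftrightarrow> a0 \<in> \<int> \<and> a1 \<in> \<int> \<and> a2 \<in> \<int> \<and> a3 \<in> \<int>"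
  proof
    assume "\<forall>i. coeff [:a0, a1, a2, a3:] i \<in> \<int>"
    from this[rule_format, of 0] this[rule_format, of 1] this[rule_format, of 2] this[rule_format, of 3]
    show "a0 \<in> \<int> \<and> a1 \<in> \<int> \<and> a2 \<in> \<int> \<and> a3 \<in> \<int>"
      by (simp add: numeral_eq_Suc)
  qed (simp add: coeff_pCons split: nat.split)
  then show ?thesis
    by (simp add: Zx4_def degree_pCons4)
qed

lemma Zx4_cases:
  assumes "a \<in> Zx4"
  obtains a0 a1 a2 a3 where "a = [:a0, a1, a2, a3:]" "a0 \<in> \<int>" "a1 \<in> \<int>" "a2 \<in> \<int>" "a3 \<in> \<int>"
  using assms pCons4_coeffs[of a] by (simp add: Zx4_def) metis

lemma pCons4_in_filt_iff:
  "[:a0, a1, a2, a3:] \<in> filt d j \<longleftrightarrow> [:a0, a1, a2, a3:] \<in> Zx4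
     \<and> (0 < j \<longrightarrow> a0 = 0) \<and> (d < j \<longrightarrow> a1 = 0) \<and> (2 * d < j \<longrightarrow> a2 = 0) \<and> (3 * d < j \<longrightarrow> a3 = 0)"
proof -
  have "(\<forall>i. i * d < j \<longrightarrow> coeff [:a0, a1, a2, a3:] i = 0) \<longleftrightarrow>
    (0 < j \<longrightarrow> a0 = 0) \<and> (d < j \<longrightarrow> a1 = 0) \<and> (2 * d < j \<longrightarrow> a2 = 0) \<and> (3 * d < j \<longrightarrow> a3 = 0)"
  proof
    assume "\<forall>i. i * d < j \<longrightarrow> coeff [:a0, a1, a2, a3:] i = 0"
    from this[rule_format, of 0] this[rule_format, of 1] this[rule_format, of 2] this[rule_format, of 3]
    show "(0 < j \<longrightarrow> a0 = 0) \<and> (d < j \<longrightarrow> a1 = 0) \<and> (2 * d < j \<longrightarrow> a2 = 0) \<and> (3 * d < j \<longrightarrow> a3 = 0)"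
      by (simp add: numeral_eq_Suc)
  next
    assume "(0 < j \<longrightarrow> a0 = 0) \<and> (d < j \<longrightarrow> a1 = 0) \<and> (2 * d < j \<longrightarrow> a2 = 0) \<and> (3 * d < j \<longrightarrow> a3 = 0)"
    then show "\<forall>i. i * d < j \<longrightarrow> coeff [:a0, a1, a2, a3:] i = 0"
      by (auto simp: coeff_pCons split: nat.split)
  qed
  then show ?thesis by (simp add: filt_def)
qed

lemma X_in_Zx4: "[:0, 1:] \<in> Zx4"
  using pCons4_in_Zx4_iff[of 0 1 0 0] by simp

lemma Zx4_add: "a \<in> Zx4 \<Longrightarrow> b \<in> Zx4 \<Longrightarrow> a + b \<in> Zx4"
  unfolding Zx4_def by (auto intro: le_less_trans[OF degree_add_le_max])

lemma Zx4_smult: "c \<in> \<int> \<Longrightarrow> a \<in> Zx4 \<Longrightarrow> smult c a \<in> Zx4"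
  unfolding Zx4_def by (auto intro: le_less_trans[OF degree_smult_le])

lemma Zx4_mul4: "a \<in> Zx4 \<Longrightarrow> b \<in> Zx4 \<Longrightarrow> mul4 a b \<in> Zx4"
  unfolding Zx4_def mul4_def
  by (auto simp: degree_trunc4 coeff_trunc4 coeff_mult intro!: Ints_sum Ints_mult)

lemma pcompose4_in_filt:
  assumes "a \<in> filt d j" "g \<in> Zx4" "coeff g 0 = 0"
  shows "pcompose4 a g \<in> filt d j"
proof -
  have "a \<in> Zx4"
    using assms(1) by (simp add: filt_def)
  then obtain a0 a1 a2 a3 where a: "a = [:a0, a1, a2, a3:]" "a0 \<in> \<int>" "a1 \<in> \<int>" "a2 \<in> \<int>" "a3 \<in> \<int>"
    by (rule Zx4_cases)
  obtain g0 g1 g2 g3 where g: "g = [:g0, g1, g2, g3:]" "g1 \<in> \<int>" "g2 \<in> \<int>" "g3 \<in> \<int>"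
    using assms(2) by (rule Zx4_cases)
  with assms(3) have "g = [:0, g1, g2, g3:]"
    by simp
  have "(0 < j \<longrightarrow> a0 = 0) \<and> (d < j \<longrightarrow> a1 = 0) \<and> (2 * d < j \<longrightarrow> a2 = 0) \<and> (3 * d < j \<longrightarrow> a3 = 0)"
    using assms(1) unfolding a(1) pCons4_in_filt_iff by blast
  moreover have "pcompose4 a g \<in> Zx4"
    unfolding a(1) \<open>g = [:0, g1, g2, g3:]\<close> pcompose4_pCons4 pCons4_in_Zx4_iff
    using a g by simp
  ultimately show ?thesis
    unfolding a(1) \<open>g = [:0, g1, g2, g3:]\<close> pcompose4_pCons4 pCons4_in_filt_iff by auto
qed

lemma pcompose4_in_Zx4: "a \<in> Zx4 \<Longrightarrow> g \<in> Zx4 \<Longrightarrow> coeff g 0 = 0 \<Longrightarrow> pcompose4 a g \<in> Zx4"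
  using pcompose4_in_filt[of a 0 0 g] by (simp add: filt_def)

section \<open>Substitutions that are isomorphisms\<close>

lemma dcoef_diff:
  "dcoef k d2 p - dcoef k d2' p = of_int (d2 - d2') * (of_nat p ^ 6 - of_nat p ^ 2) / 60"
proof (cases "p = 2")
  case False
  have "p^2 * (p^4 - 1) = p^6 - p^2"
    by (simp add: diff_mult_distrib2 flip: power_add)
  moreover have "p^2 \<le> p^6"
    by (cases p) (simp_all add: power_increasing)
  ultimately have e: "(of_nat (p^2 * (p^4 - 1)) :: rat) = of_nat p ^ 6 - of_nat p ^ 2"
    by (simp add: of_nat_diff)
  have "dcoef k d2 p - dcoef k d2' p = of_nat (p^2 * (p^4 - 1)) * (of_int d2 - of_int d2') / 60"
    using False by (simp add: dcoef_def algebra_simps diff_divide_distrib)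
  then show ?thesis
    unfolding e by (simp add: mult.commute)
qed (simp add: dcoef_def)

lemma psi_prime_intertwining_cube_shift:
  assumes "of_int (d2 - d2') = 60 * B"
  shows "pcompose4 (psi_prime k d2 p) [:0, 1, 0, B:] = pcompose4 [:0, 1, 0, B:] (psi_prime k d2' p)"
proof -
  define P :: rat where "P = of_nat (p^2)"
  define c :: rat where "c = of_int k * of_nat (p^2 * (p^2 - 1)) / 12"
  have "pcompose4 (psi_prime k d2 p) [:0, 1, 0, B:] = [:0, P, c, P * B + dcoef k d2 p:]"
    by (simp add: psi_prime_def pcompose4_pCons4 P_def c_def)
  moreover have "pcompose4 [:0, 1, 0, B:] (psi_prime k d2' p) = [:0, P, c, dcoef k d2' p + B * P^3:]"
    by (simp add: psi_prime_def pcompose4_pCons4 P_def c_def)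
  moreover have "P * B + dcoef k d2 p = dcoef k d2' p + B * P^3"
    using dcoef_diff[of k d2 p d2'] assms
    by (simp add: P_def algebra_simps flip: power_mult)
  ultimately show ?thesis
    by simp
qed

lemma pcompose4_filt_lambda_iso:
  assumes gZ: "g \<in> Zx4" and hZ: "h \<in> Zx4" and g0: "coeff g 0 = 0" and h0: "coeff h 0 = 0"
    and gh: "pcompose4 g h = [:0, 1:]" and hg: "pcompose4 h g = [:0, 1:]"
    and psi: "\<And>p. pcompose4 (psi_prime k d2 p) g = pcompose4 g (psi_prime k' d2' p)"
  shows "filt_lambda_iso d k d2 k' d2' (\<lambda>a. pcompose4 a g)"
proof -
  have inverse: "pcompose4 (pcompose4 a u) v = a"
    if "a \<in> Zx4" "coeff v 0 = 0" "pcompose4 u v = [:0, 1:]" for a u v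
    using that by (simp add: pcompose4_assoc pcompose4_X_right trunc4_id Zx4_def)
  have "filt d j \<subseteq> (\<lambda>a. pcompose4 a g) ` filt d j" for j
  proof
    fix b assume b: "b \<in> filt d j"
    then have "b = pcompose4 (pcompose4 b h) g"
      using inverse g0 hg by (simp add: filt_def)
    moreover have "pcompose4 b h \<in> filt d j"
      using b hZ h0 by (rule pcompose4_in_filt)
    ultimately show "b \<in> (\<lambda>a. pcompose4 a g) ` filt d j"
      by (rule image_eqI)
  qed
  then have "(\<lambda>a. pcompose4 a g) ` filt d j = filt d j" for j
    using pcompose4_in_filt[OF _ gZ g0] by blast
  moreover have "bij_betw (\<lambda>a. pcompose4 a g) Zx4 Zx4"
  proof (rule bij_betw_byWitness[where f' = "\<lambda>a. pcompose4 a h"])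
    show "\<forall>a\<in>Zx4. pcompose4 (pcompose4 a g) h = a"
      using inverse h0 gh by blast
    show "\<forall>a\<in>Zx4. pcompose4 (pcompose4 a h) g = a"
      using inverse g0 hg by blast
    show "(\<lambda>a. pcompose4 a g) ` Zx4 \<subseteq> Zx4" "(\<lambda>a. pcompose4 a h) ` Zx4 \<subseteq> Zx4"
      using pcompose4_in_Zx4 gZ g0 hZ h0 by blast+
  qed
  moreover have "pcompose4 (lam k d2 n a) g = lam k' d2' n (pcompose4 a g)" for n a
    by (rule lam_commute)
      (simp_all add: pcompose4_add pcompose4_smult pcompose4_1 pcompose4_mul4 g0 adams_intertwining psi)
  ultimately show ?thesis
    by (simp add: filt_lambda_iso_def pcompose4_1 pcompose4_add pcompose4_mul4 g0)
qed

lemma eq_mod_60_imp_iso_filt_lambda: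
  assumes "d2 mod 60 = d2' mod 60"
  shows "iso_filt_lambda d k d2 k d2'"
proof -
  obtain B where B: "d2 - d2' = 60 * B"
    using assms mod_eq_dvd_iff by blast
  define g h :: "rat poly" where "g = [:0, 1, 0, of_int B:]" and "h = [:0, 1, 0, - of_int B:]"
  have "filt_lambda_iso d k d2 k d2' (\<lambda>a. pcompose4 a g)"
  proof (rule pcompose4_filt_lambda_iso[where h = h])
    show "g \<in> Zx4" "h \<in> Zx4" "coeff g 0 = 0" "coeff h 0 = 0"
      by (simp_all add: g_def h_def pCons4_in_Zx4_iff)
    show "pcompose4 g h = [:0, 1:]" "pcompose4 h g = [:0, 1:]"
      by (simp_all add: g_def h_def pcompose4_pCons4)
    show "pcompose4 (psi_prime k d2 p) g = pcompose4 g (psi_prime k d2' p)" for p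
      unfolding g_def using B by (intro psi_prime_intertwining_cube_shift) simp
  qed
  then show ?thesis
    unfolding iso_filt_lambda_def by blast
qed

section \<open>Isomorphisms are substitutions\<close>

lemma additive_on_Zx4_smult_Ints:
  assumes add: "\<And>a b. a \<in> Zx4 \<Longrightarrow> b \<in> Zx4 \<Longrightarrow> f (a + b) = f a + f b"
    and "c \<in> \<int>" and a: "a \<in> Zx4"
  shows "f (smult c a) = smult c (f a)"
proof -
  obtain n where c: "c = of_int n"
    using \<open>c \<in> \<int>\<close> by (rule Ints_cases)
  have step: "f (smult (of_int (i + 1)) a) = f (smult (of_int i) a) + f a" for i
    using add[of "smult (of_int i) a" a] Zx4_smult[of "of_int i" a] a by (simp add: smult_add_left)
  have "f (smult (of_int n) a) = smult (of_int n) (f a)"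
  proof (induction n rule: int_induct[where k = 0])
    case base
    have "f 0 = 0"
      using add[of 0 0] by (simp add: Zx4_def)
    then show ?case by simp
  next
    case (step1 i)
    then show ?case using step[of i] by (simp add: smult_add_left)
  next
    case (step2 i)
    then show ?case using step[of "i - 1"] by (simp add: smult_diff_left eq_diff_eq)
  qed
  then show ?thesis using c by simp
qed

lemma pcompose4_pCons4_expand:
  assumes "degree g < 4"
  shows "pcompose4 [:a0, a1, a2, a3:] g =
    smult a0 1 + smult a1 g + smult a2 (mul4 g g) + smult a3 (mul4 g (mul4 g g))"
proof -
  have "pcompose [:a0, a1, a2, a3:] g = smult a0 1 + smult a1 g + smult a2 (g * g) + smult a3 (g * (g * g))"
    by (simp add: pcompose_pCons algebra_simps)
  then show ?thesis
    using assms by (simp add: pcompose4_def trunc4_add trunc4_smult trunc4_id mul4_mul4, simp add: mul4_def)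
qed

lemma ring_hom_Zx4_eq_pcompose4:
  assumes one: "f 1 = 1"
    and add: "\<And>a b. a \<in> Zx4 \<Longrightarrow> b \<in> Zx4 \<Longrightarrow> f (a + b) = f a + f b"
    and mul: "\<And>a b. a \<in> Zx4 \<Longrightarrow> b \<in> Zx4 \<Longrightarrow> f (mul4 a b) = mul4 (f a) (f b)"
    and "degree (f [:0, 1:]) < 4" and "a \<in> Zx4"
  shows "f a = pcompose4 a (f [:0, 1:])"
proof -
  define X :: "rat poly" where "X = [:0, 1:]"
  have XZ: "X \<in> Zx4" and oneZ: "1 \<in> Zx4"
    using X_in_Zx4 pCons4_in_Zx4_iff[of 1 0 0 0] by (simp_all add: X_def one_pCons)
  have X2Z: "mul4 X X \<in> Zx4" and X3Z: "mul4 X (mul4 X X) \<in> Zx4"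
    using XZ by (simp_all add: Zx4_mul4)
  have int: "f (smult c b) = smult c (f b)" if "c \<in> \<int>" "b \<in> Zx4" for c b
    using add that by (rule additive_on_Zx4_smult_Ints)
  obtain a0 a1 a2 a3 where a: "a = [:a0, a1, a2, a3:]" "a0 \<in> \<int>" "a1 \<in> \<int>" "a2 \<in> \<int>" "a3 \<in> \<int>"
    using \<open>a \<in> Zx4\<close> by (rule Zx4_cases)
  have "a = pcompose4 a X"
    using \<open>a \<in> Zx4\<close> by (simp add: X_def pcompose4_X_right trunc4_id Zx4_def)
  also have "\<dots> = smult a0 1 + smult a1 X + smult a2 (mul4 X X) + smult a3 (mul4 X (mul4 X X))"
    unfolding a(1) by (rule pcompose4_pCons4_expand) (simp add: X_def)
  finally have "f a = f (smult a0 1 + smult a1 X + smult a2 (mul4 X X) + smult a3 (mul4 X (mul4 X X)))"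
    by simp
  also have "\<dots> = smult a0 1 + smult a1 (f X) + smult a2 (mul4 (f X) (f X)) + smult a3 (mul4 (f X) (mul4 (f X) (f X)))"
    using a XZ oneZ X2Z X3Z by (simp only: add int mul one Zx4_add Zx4_smult)
  also have "\<dots> = pcompose4 a (f X)"
    unfolding a(1) using assms(4) by (simp add: X_def pcompose4_pCons4_expand)
  finally show ?thesis
    by (simp add: X_def)
qed

lemma ring_automorphism_Zx4_is_substitution:
  assumes bij: "bij_betw f Zx4 Zx4" and one: "f 1 = 1"
    and add: "\<And>a b. a \<in> Zx4 \<Longrightarrow> b \<in> Zx4 \<Longrightarrow> f (a + b) = f a + f b"
    and mul: "\<And>a b. a \<in> Zx4 \<Longrightarrow> b \<in> Zx4 \<Longrightarrow> f (mul4 a b) = mul4 (f a) (f b)"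
  obtains g where "g \<in> Zx4" "coeff g 0 = 0" "coeff g 1 = 1 \<or> coeff g 1 = -1"
    "\<And>a. a \<in> Zx4 \<Longrightarrow> f a = pcompose4 a g"
proof -
  define X :: "rat poly" where "X = [:0, 1:]"
  define g where "g = f X"
  have XZ: "X \<in> Zx4"
    using X_in_Zx4 by (simp add: X_def)
  have gZ: "g \<in> Zx4"
    using bij XZ by (simp add: g_def bij_betw_apply)
  have "degree (f [:0, 1:]) < 4"
    using gZ by (simp add: g_def X_def Zx4_def)
  then have f_eq: "f a = pcompose4 a g" if "a \<in> Zx4" for a
    using ring_hom_Zx4_eq_pcompose4[OF one add mul _ that] by (simp add: g_def X_def)
  have g0: "coeff g 0 = 0"
  proof -
    have "f 0 = 0"
      using add[of 0 0] by (simp add: Zx4_def)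
    moreover have "mul4 X (mul4 X (mul4 X X)) = 0"
      by (simp add: X_def mul4_def poly_eq_iff coeff_trunc4 coeff_pCons split: nat.split)
    moreover have "mul4 g (mul4 g (mul4 g g)) = f (mul4 X (mul4 X (mul4 X X)))"
      using XZ Zx4_mul4[OF XZ XZ] Zx4_mul4[OF XZ Zx4_mul4[OF XZ XZ]] by (simp only: g_def mul)
    ultimately have "mul4 g (mul4 g (mul4 g g)) = 0"
      by simp
    then have "coeff (mul4 g (mul4 g (mul4 g g))) 0 = 0"
      by simp
    then show ?thesis
      by (simp add: coeff_mul4_0)
  qed
  have "coeff g 1 = 1 \<or> coeff g 1 = -1"
  proof -
    have "X \<in> f ` Zx4"
      using bij XZ by (simp add: bij_betw_def)
    then obtain h where h: "h \<in> Zx4" "f h = X"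
      by (metis imageE)
    then have "pcompose4 h g = X"
      using f_eq by simp
    then have "coeff h 1 * coeff g 1 = 1"
      using coeff_pcompose4_1[OF g0, of h] by (simp add: X_def)
    moreover have "coeff h 1 \<in> \<int>" "coeff g 1 \<in> \<int>"
      using h(1) gZ by (simp_all add: Zx4_def)
    then obtain m n where "coeff h 1 = of_int m" "coeff g 1 = of_int n"
      by (elim Ints_cases)
    ultimately have "rat_of_int (m * n) = 1"
      by simp
    then have "m * n = 1"
      by (simp only: of_int_eq_1_iff)
    then show ?thesis
      using \<open>coeff g 1 = of_int n\<close> zmult_eq_1_iff by auto
  qed
  then show ?thesis
    using that gZ g0 f_eq by blast
qed

lemma psi_x_1: "psi_x k d2 1 = [:0, 1:]"
  by (simp add: psi_x_def)

lemma psi_x_2: "psi_x k d2 2 = [:0, 4, of_int k, of_int d2:]"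
proof -
  have "prime_factorization (2::nat) = {#2#}"
    by (rule prime_factorization_prime) simp
  then have "psi_x k d2 2 = trunc4 (psi_prime k d2 2)"
    by (simp add: psi_x_def pcompose_pCons)
  also have "psi_prime k d2 2 = [:0, 4, of_int k, of_int d2:]"
    by (simp add: psi_prime_def dcoef_def)
  finally show ?thesis
    by (simp add: trunc4_id degree_pCons4)
qed

lemma lam_2: "degree a < 4 \<Longrightarrow> smult 2 (lam k d2 2 a) = mul4 a a - adams k d2 2 a"
  by (simp add: lam_def numeral_2_eq_2 Let_def adams_def psi_x_1[unfolded One_nat_def] trunc4_id mul4_def)

lemma adams_2_X: "adams k d2 2 [:0, 1:] = psi_x k d2 2"
  by (simp add: adams_eq_pcompose4 pcompose4_X_left trunc4_id psi_x_2 degree_pCons4)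

lemma lam_2_X_in_Zx4:
  assumes "odd k" "even d2"
  shows "lam k d2 2 [:0, 1:] \<in> Zx4"
proof -
  obtain m n where m: "k = 2 * m + 1" and n: "d2 = 2 * n"
    using assms by (auto elim!: oddE evenE)
  have "smult 2 (lam k d2 2 [:0, 1:]) = smult 2 [:0, -2, - of_int m, - of_int n:]"
    using lam_2[of "[:0, 1:]" k d2]
    by (simp add: adams_2_X psi_x_2 m n mul4_def trunc4_id degree_pCons4 algebra_simps)
  then have "lam k d2 2 [:0, 1:] = [:0, -2, - of_int m, - of_int n:]"
    by (metis smult_eq_iff zero_neq_numeral)
  then show ?thesis
    by (simp add: pCons4_in_Zx4_iff)
qed

lemma lam_2_intertwining_imp_psi_x_2_intertwining:
  assumes g: "coeff g 0 = 0" "degree g < 4"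
    and lam_2_X: "pcompose4 (lam k d2 2 [:0, 1:]) g = lam k' d2' 2 g"
  shows "pcompose4 (psi_x k d2 2) g = pcompose4 g (psi_x k' d2' 2)"
proof -
  define X :: "rat poly" where "X = [:0, 1:]"
  have "psi_x k d2 2 = mul4 X X - smult 2 (lam k d2 2 X)"
    using lam_2[of X k d2] by (simp add: X_def adams_2_X)
  then have "pcompose4 (psi_x k d2 2) g = mul4 g g - smult 2 (lam k' d2' 2 g)"
    using g lam_2_X
    by (simp add: pcompose4_diff pcompose4_smult pcompose4_mul4 pcompose4_X_left trunc4_id X_def)
  also have "\<dots> = pcompose4 g (psi_x k' d2' 2)"
    using lam_2[OF g(2)] by (simp add: adams_eq_pcompose4)
  finally show ?thesis .
qed

lemma psi_2_coefficient_equations_imp_eq_mod_60: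
  fixes e a b k k' d2 d2' :: int
  assumes e: "e = 1 \<or> e = -1" and k: "k \<in> {1, 5}" "k' \<in> {1, 5}"
    and coeff2: "4 * a + k * e^2 = e * k' + 16 * a"
    and coeff3: "4 * b + 2 * k * e * a + d2 * e^3 = e * d2' + 8 * a * k' + 64 * b"
  shows "k = k' \<and> d2 mod 60 = d2' mod 60"
  using e
proof
  assume "e = 1"
  then have "k - k' = 12 * a"
    using coeff2 by simp
  moreover have "k - k' \<in> {-4, 0, 4}"
    using k by auto
  ultimately have "a = 0"
    by auto
  then have "k = k'"
    using \<open>k - k' = 12 * a\<close> by simp
  moreover have "d2 - d2' = 60 * b"
    using coeff3 \<open>e = 1\<close> \<open>a = 0\<close> by simp
  ultimately show ?thesis
    by (simp add: mod_eq_dvd_iff)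
next
  assume "e = -1"
  then have "k + k' = 12 * a"
    using coeff2 by simp
  moreover have "k + k' \<in> {2, 6, 10}"
    using k by auto
  ultimately show ?thesis
    by (auto; presburger)
qed

lemma psi_x_2_intertwining_imp_eq_mod_60:
  assumes g: "g \<in> Zx4" "coeff g 0 = 0" "coeff g 1 = 1 \<or> coeff g 1 = -1"
    and k: "k \<in> {1, 5}" "k' \<in> {1, 5}"
    and psi_2: "pcompose4 (psi_x k d2 2) g = pcompose4 g (psi_x k' d2' 2)"
  shows "k = k' \<and> d2 mod 60 = d2' mod 60"
proof -
  obtain g0 g1 g2 g3 where g_eq: "g = [:g0, g1, g2, g3:]" and "g1 \<in> \<int>" "g2 \<in> \<int>" "g3 \<in> \<int>"
    using g(1) by (rule Zx4_cases)
  then obtain e a b where e: "g1 = of_int e" and "g2 = of_int a" "g3 = of_int b"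
    by (metis Ints_cases)
  with g_eq g(2) have g_int: "g = [:0, of_int e, of_int a, of_int b:]"
    by simp
  have "pcompose4 [:0, 4, of_int k, of_int d2:] [:0, of_int e, of_int a, of_int b:] =
        pcompose4 [:0, of_int e, of_int a, of_int b:] [:0, 4, of_int k', of_int d2':]"
    using psi_2 by (simp add: g_int psi_x_2)
  then have "rat_of_int (4 * a + k * e^2) = rat_of_int (e * k' + 16 * a)"
    and "rat_of_int (4 * b + 2 * k * e * a + d2 * e^3) = rat_of_int (e * d2' + 8 * a * k' + 64 * b)"
    unfolding pcompose4_pCons4 by (simp_all add: algebra_simps)
  moreover have "e = 1 \<or> e = -1"
    using g(3) g_eq e by auto
  ultimately show ?thesis
    using k by (intro psi_2_coefficient_equations_imp_eq_mod_60) (simp_all only: of_int_eq_iff)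
qed

lemma filt_lambda_iso_imp_eq_mod_60:
  assumes iso: "filt_lambda_iso d k d2 k' d2' f"
    and k: "k \<in> {1, 5}" "k' \<in> {1, 5}" and "even d2"
  shows "k = k' \<and> d2 mod 60 = d2' mod 60"
proof -
  have bij: "bij_betw f Zx4 Zx4" and one: "f 1 = 1"
    and add: "\<And>a b. a \<in> Zx4 \<Longrightarrow> b \<in> Zx4 \<Longrightarrow> f (a + b) = f a + f b"
    and mul: "\<And>a b. a \<in> Zx4 \<Longrightarrow> b \<in> Zx4 \<Longrightarrow> f (mul4 a b) = mul4 (f a) (f b)"
    and f_lam: "\<And>n a. a \<in> Zx4 \<Longrightarrow> f (lam k d2 n a) = lam k' d2' n (f a)"
    using iso unfolding filt_lambda_iso_def by auto
  obtain g where g: "g \<in> Zx4" "coeff g 0 = 0" "coeff g 1 = 1 \<or> coeff g 1 = -1"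
    and f_eq: "\<And>a. a \<in> Zx4 \<Longrightarrow> f a = pcompose4 a g"
    using ring_automorphism_Zx4_is_substitution[OF bij one add mul] by blast
  have "lam k d2 2 [:0, 1:] \<in> Zx4"
    using k \<open>even d2\<close> by (intro lam_2_X_in_Zx4) auto
  then have "pcompose4 (lam k d2 2 [:0, 1:]) g = f (lam k d2 2 [:0, 1:])"
    by (simp add: f_eq)
  also have "\<dots> = lam k' d2' 2 (f [:0, 1:])"
    using X_in_Zx4 by (rule f_lam)
  also have "f [:0, 1:] = g"
    using f_eq[OF X_in_Zx4] g(1) by (simp add: pcompose4_X_left trunc4_id Zx4_def)
  finally have "pcompose4 (lam k d2 2 [:0, 1:]) g = lam k' d2' 2 g" .
  then have "pcompose4 (psi_x k d2 2) g = pcompose4 g (psi_x k' d2' 2)"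
    using g by (intro lam_2_intertwining_imp_psi_x_2_intertwining) (simp_all add: Zx4_def)
  then show ?thesis
    using g k by (intro psi_x_2_intertwining_imp_eq_mod_60)
qed

theorem lemma4p2:
  fixes d :: nat and k k' d2 d2' :: int
  assumes "d > 0"
    and "k \<in> {1, 5}" and "k' \<in> {1, 5}"
    and "even d2" and "even d2'"
  shows "iso_filt_lambda d k d2 k' d2' \<longleftrightarrow> k = k' \<and> d2 mod 60 = d2' mod 60"
proof
  assume "iso_filt_lambda d k d2 k' d2'"
  then obtain f where "filt_lambda_iso d k d2 k' d2' f"
    unfolding iso_filt_lambda_def by blast
  then show "k = k' \<and> d2 mod 60 = d2' mod 60"
    using assms(2-4) by (rule filt_lambda_iso_imp_eq_mod_60)
next
  assume "k = k' \<and> d2 mod 60 = d2' mod 60"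
  then show "iso_filt_lambda d k d2 k' d2'"
    using eq_mod_60_imp_iso_filt_lambda by blast
qed

end
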